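(* Let $G$ be a prime graph and $v\in V(G)$. (1) $v$ is simplicial if and only if, in every induced subgraph of $G$ isomorphic to $P_4$ that contains $v$, the vertex $v$ has degree one (in that $P_4$). (2) $v$ is antisimplicial if and only if, in every induced subgraph of $G$ isomorphic to $P_4$ that contains $v$, the vertex $v$ has degree two (in that $P_4$).
   Context: All graphs are finite and simple. $P_4$ is the path on four vertices. A vertex $b\notin X$ is mixed on $X$ if it has both a neighbor and a non-neighbor in $X$. A homogeneous set is a set $X\subseteq V(G)$ with $1<|X|<|V(G)|$ such that no vertex outside $X$ is mixed on $X$. $G$ is prime if $|V(G)|\ge4$ and has no homogeneous set. A vertex $v$ is simplicial if $N(v)$ is a clique, antisimplicial if $V(G)\setminus N(v)$ is a stable set. *)

theory Defs
  imports Main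
begin

definition graph :: "'a set \<Rightarrow> ('a \<Rightarrow> 'a \<Rightarrow> bool) \<Rightarrow> bool" where
  "graph V E \<longleftrightarrow> finite V \<and> (\<forall>x y. E x y \<longrightarrow> x \<in> V \<and> y \<in> V)
     \<and> (\<forall>x y. E x y \<longrightarrow> E y x) \<and> (\<forall>x. \<not> E x x)"

definition nbhd :: "'a set \<Rightarrow> ('a \<Rightarrow> 'a \<Rightarrow> bool) \<Rightarrow> 'a \<Rightarrow> 'a set" where
  "nbhd V E v = {u \<in> V. E v u}"

definition clique :: "('a \<Rightarrow> 'a \<Rightarrow> bool) \<Rightarrow> 'a set \<Rightarrow> bool" where
  "clique E S \<longleftrightarrow> (\<forall>x\<in>S. \<forall>y\<in>S. x \<noteq> y \<longrightarrow> E x y)"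

definition stable :: "('a \<Rightarrow> 'a \<Rightarrow> bool) \<Rightarrow> 'a set \<Rightarrow> bool" where
  "stable E S \<longleftrightarrow> (\<forall>x\<in>S. \<forall>y\<in>S. \<not> E x y)"

definition simplicial :: "'a set \<Rightarrow> ('a \<Rightarrow> 'a \<Rightarrow> bool) \<Rightarrow> 'a \<Rightarrow> bool" where
  "simplicial V E v \<longleftrightarrow> clique E (nbhd V E v)"

definition antisimplicial :: "'a set \<Rightarrow> ('a \<Rightarrow> 'a \<Rightarrow> bool) \<Rightarrow> 'a \<Rightarrow> bool" where
  "antisimplicial V E v \<longleftrightarrow> stable E (V - nbhd V E v)"

definition mixed :: "('a \<Rightarrow> 'a \<Rightarrow> bool) \<Rightarrow> 'a \<Rightarrow> 'a set \<Rightarrow> bool" where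
  "mixed E b X \<longleftrightarrow> b \<notin> X \<and> (\<exists>x\<in>X. E b x) \<and> (\<exists>y\<in>X. \<not> E b y)"

definition homogeneous :: "'a set \<Rightarrow> ('a \<Rightarrow> 'a \<Rightarrow> bool) \<Rightarrow> 'a set \<Rightarrow> bool" where
  "homogeneous V E X \<longleftrightarrow> X \<subseteq> V \<and> 1 < card X \<and> card X < card V
     \<and> (\<forall>b\<in>V - X. \<not> mixed E b X)"

definition prime_graph :: "'a set \<Rightarrow> ('a \<Rightarrow> 'a \<Rightarrow> bool) \<Rightarrow> bool" where
  "prime_graph V E \<longleftrightarrow> card V \<ge> 4 \<and> (\<nexists>X. homogeneous V E X)"

definition induced_P4 :: "'a set \<Rightarrow> ('a \<Rightarrow> 'a \<Rightarrow> bool) \<Rightarrow> 'a set \<Rightarrow> bool" where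
  "induced_P4 V E S \<longleftrightarrow> S \<subseteq> V \<and> (\<exists>f. bij_betw f {0..<4::nat} S \<and>
     (\<forall>i<4. \<forall>j<4. E (f i) (f j) \<longleftrightarrow> (i = j + 1 \<or> j = i + 1)))"

definition deg_in :: "('a \<Rightarrow> 'a \<Rightarrow> bool) \<Rightarrow> 'a set \<Rightarrow> 'a \<Rightarrow> nat" where
  "deg_in E S v = card {u \<in> S. E v u}"

end

theory Submission
  imports Defs
begin

text \<open>
  Simplicial vertices cannot be interior in an induced \<open>P\<^sub>4\<close> (the two path neighbours
  are non-adjacent), and antisimplicial vertices cannot be ends (the far edge avoids \<open>N(v)\<close>).
  Conversely, if \<open>v\<close> has two non-adjacent neighbours, let \<open>C\<close> be a component of the
  complement of \<open>G[N(v)]\<close> with at least two vertices. Primality yields a vertex \<open>w\<close> mixed on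
  \<open>C\<close>; it lies outside \<open>N(v)\<close>, and since \<open>C\<close> is connected it separates the ends of some
  non-edge \<open>xy\<close> of \<open>C\<close>, giving the induced path \<open>y v x w\<close>. Dually, two adjacent
  non-neighbours give a component \<open>C\<close> of \<open>G - N[v]\<close>, a mixed vertex \<open>w \<in> N(v)\<close>, an edge
  \<open>xy\<close> of \<open>C\<close> split by \<open>w\<close>, and the induced path \<open>v w x y\<close>.
\<close>

lemma graphD:
  assumes "graph V E"
  shows "E x y \<Longrightarrow> E y x" and "\<not> E x x" and "E x y \<Longrightarrow> x \<in> V \<and> y \<in> V"
  using assms by (auto simp: graph_def)

lemma all_less_4_iff: "(\<forall>i<(4::nat). P i) \<longleftrightarrow> P 0 \<and> P 1 \<and> P 2 \<and> P 3"
  by (auto simp: numeral_eq_Suc less_Suc_eq)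

lemma induced_P4_path:
  assumes "graph V E" and "a \<in> V" "b \<in> V" "c \<in> V" "d \<in> V" and "distinct [a, b, c, d]"
    and "E a b" "E b c" "E c d" "\<not> E a c" "\<not> E a d" "\<not> E b d"
  shows "induced_P4 V E {a, b, c, d}"
    and "deg_in E {a, b, c, d} a = 1" and "deg_in E {a, b, c, d} b = 2"
proof -
  have E: "E a b" "E b c" "E c d" "E b a" "E c b" "E d c" "\<not> E a c" "\<not> E c a"
    "\<not> E a d" "\<not> E d a" "\<not> E b d" "\<not> E d b" "\<And>x. \<not> E x x"
    using assms(1,7-12) graphD by metis+
  define f :: "nat \<Rightarrow> _" where "f = (\<lambda>i. [a, b, c, d] ! i)"
  have "bij_betw f {0..<4} {a, b, c, d}"
    using assms(6) bij_betw_nth[of "[a, b, c, d]" "{0..<4}" "{a, b, c, d}"]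
    by (simp add: f_def atLeast0LessThan)
  moreover have "\<forall>i<4. \<forall>j<4. E (f i) (f j) \<longleftrightarrow> (i = j + 1 \<or> j = i + 1)"
    using E by (simp add: all_less_4_iff f_def)
  ultimately show "induced_P4 V E {a, b, c, d}"
    using assms(2-5) unfolding induced_P4_def by blast
  have "{u \<in> {a, b, c, d}. E a u} = {b}" "{u \<in> {a, b, c, d}. E b u} = {a, c}"
    using E by auto
  then show "deg_in E {a, b, c, d} a = 1" "deg_in E {a, b, c, d} b = 2"
    using assms(6) by (simp_all add: deg_in_def)
qed

lemma deg_in_P4:
  assumes "bij_betw f {0..<4::nat} S"
    and "\<forall>i<4. \<forall>j<4. E (f i) (f j) \<longleftrightarrow> (i = j + 1 \<or> j = i + 1)" and "i < 4"
  shows "deg_in E S (f i) = (if i = 0 \<or> i = 3 then 1 else 2)"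
proof -
  let ?J = "{j \<in> {0..<4}. i = j + 1 \<or> j = i + 1}"
  have "{u \<in> S. E (f i) u} = f ` ?J"
    using assms unfolding bij_betw_def by auto
  moreover have "inj_on f ?J"
    using assms(1) unfolding bij_betw_def by (auto intro: inj_on_subset)
  moreover have "?J = (if i = 0 then {1} else if i = 1 then {0, 2} else if i = 2 then {1, 3} else {2})"
    using \<open>i < 4\<close> by (auto simp: numeral_eq_Suc less_Suc_eq)
  ultimately show ?thesis
    using \<open>i < 4\<close> by (simp add: deg_in_def card_image)
qed

lemma induced_P4_interior:
  assumes "induced_P4 V E S" and "v \<in> S" and "deg_in E S v \<noteq> 1"
  obtains x y where "x \<in> S" "y \<in> S" "x \<noteq> y" "E v x" "E v y" "\<not> E x y"
proof -
  obtain f where f: "bij_betw f {0..<4::nat} S"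
    and E: "\<forall>i<4. \<forall>j<4. E (f i) (f j) \<longleftrightarrow> (i = j + 1 \<or> j = i + 1)"
    using assms(1) unfolding induced_P4_def by blast
  obtain i where "i < 4" "v = f i"
    using f \<open>v \<in> S\<close> unfolding bij_betw_def by auto
  have S: "f j \<in> S" if "j < 4" for j
    using that f unfolding bij_betw_def by auto
  have inj: "f j \<noteq> f k" if "j < 4" "k < 4" "j \<noteq> k" for j k
    using that f unfolding bij_betw_def by (auto simp: inj_on_eq_iff)
  from assms(3) deg_in_P4[OF f E] \<open>i < 4\<close> \<open>v = f i\<close> consider "i = 1" | "i = 2"
    by (fastforce split: if_splits)
  then show thesis
  proof cases
    case 1
    then show thesis using that[of "f 0" "f 2"] S inj[of 0 2] E \<open>v = f i\<close> by (simp add: all_less_4_iff)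
  next
    case 2
    then show thesis using that[of "f 1" "f 3"] S inj[of 1 3] E \<open>v = f i\<close> by (simp add: all_less_4_iff)
  qed
qed

lemma induced_P4_end:
  assumes "induced_P4 V E S" and "v \<in> S" and "deg_in E S v \<noteq> 2"
  obtains x y where "x \<in> S" "y \<in> S" "\<not> E v x" "\<not> E v y" "E x y"
proof -
  obtain f where f: "bij_betw f {0..<4::nat} S"
    and E: "\<forall>i<4. \<forall>j<4. E (f i) (f j) \<longleftrightarrow> (i = j + 1 \<or> j = i + 1)"
    using assms(1) unfolding induced_P4_def by blast
  obtain i where "i < 4" "v = f i"
    using f \<open>v \<in> S\<close> unfolding bij_betw_def by auto
  have S: "f j \<in> S" if "j < 4" for j
    using that f unfolding bij_betw_def by auto
  from assms(3) deg_in_P4[OF f E] \<open>i < 4\<close> \<open>v = f i\<close> consider "i = 0" | "i = 3"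
    by (fastforce split: if_splits)
  then show thesis
  proof cases
    case 1
    then show thesis using that[of "f 2" "f 3"] S E \<open>v = f i\<close> by (simp add: all_less_4_iff)
  next
    case 2
    then show thesis using that[of "f 0" "f 1"] S E \<open>v = f i\<close> by (simp add: all_less_4_iff)
  qed
qed

lemma prime_graph_mixed_vertex:
  assumes "prime_graph V E" and "C \<subseteq> V" "C \<noteq> V" and "a \<in> C" "b \<in> C" "a \<noteq> b"
  obtains w where "w \<in> V - C" "mixed E w C"
proof -
  have "finite V"
    using assms(1) by (auto simp: prime_graph_def intro: card_ge_0_finite)
  moreover have "card {a, b} \<le> card C"
    using assms(4,5) finite_subset[OF assms(2) \<open>finite V\<close>] by (intro card_mono) auto
  ultimately have "card C < card V" "1 < card C"
    using assms(2,3,6) by (simp_all add: psubset_card_mono)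
  moreover have "\<not> homogeneous V E C"
    using assms(1) by (simp add: prime_graph_def)
  ultimately show thesis
    using that assms(2) unfolding homogeneous_def by blast
qed

lemma mixed_on_component_splits_edge:
  assumes "sym R" and "x \<in> R\<^sup>* `` {a}" "y \<in> R\<^sup>* `` {a}" and "E w x" "\<not> E w y"
  obtains p q where "p \<in> R\<^sup>* `` {a}" "(p, q) \<in> R" "E w p" "\<not> E w q"
proof (rule ccontr)
  note split = that
  assume no_split: "\<not> thesis"
  have "E w z \<longleftrightarrow> E w a" if "(a, z) \<in> R\<^sup>*" for z
    using that
  proof (induction rule: rtrancl_induct)
    case (step z z')
    then have "z \<in> R\<^sup>* `` {a}" "z' \<in> R\<^sup>* `` {a}"
      by (simp_all add: rtrancl.rtrancl_into_rtrancl)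
    moreover have "(z', z) \<in> R"
      using \<open>sym R\<close> \<open>(z, z') \<in> R\<close> by (rule symD)
    ultimately show ?case
      using step.IH \<open>(z, z') \<in> R\<close> no_split split[of z z'] split[of z' z] by metis
  qed simp
  then have "E w x \<longleftrightarrow> E w a" "E w y \<longleftrightarrow> E w a"
    using assms(2,3) by blast+
  with assms(4,5) show False
    by simp
qed

lemma simplicial_deg_in_P4:
  assumes "simplicial V E v" and "induced_P4 V E S" and "v \<in> S"
  shows "deg_in E S v = 1"
proof (rule ccontr)
  assume "deg_in E S v \<noteq> 1"
  with assms(2,3) obtain x y where "x \<in> S" "y \<in> S" "x \<noteq> y" "E v x" "E v y" "\<not> E x y"
    by (rule induced_P4_interior)
  moreover have "S \<subseteq> V"
    using assms(2) by (simp add: induced_P4_def)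
  ultimately show False
    using assms(1) unfolding simplicial_def clique_def nbhd_def by blast
qed

lemma antisimplicial_deg_in_P4:
  assumes "antisimplicial V E v" and "induced_P4 V E S" and "v \<in> S"
  shows "deg_in E S v = 2"
proof (rule ccontr)
  assume "deg_in E S v \<noteq> 2"
  with assms(2,3) obtain x y where "x \<in> S" "y \<in> S" "\<not> E v x" "\<not> E v y" "E x y"
    by (rule induced_P4_end)
  moreover have "S \<subseteq> V"
    using assms(2) by (simp add: induced_P4_def)
  ultimately show False
    using assms(1) unfolding antisimplicial_def stable_def nbhd_def by blast
qed

lemma not_simplicial_induced_P4:
  assumes "graph V E" "prime_graph V E" "v \<in> V" and "\<not> simplicial V E v"
  obtains S where "induced_P4 V E S" "v \<in> S" "deg_in E S v = 2"
proof -
  define N where "N = nbhd V E v"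
  have N: "x \<in> N \<longleftrightarrow> E v x" for x
    using graphD(3)[OF assms(1)] by (auto simp: N_def nbhd_def)
  obtain a b where ab: "a \<in> N" "b \<in> N" "a \<noteq> b" "\<not> E a b"
    using assms(4) unfolding simplicial_def clique_def N_def by blast
  define R where "R = {(x, y). x \<in> N \<and> y \<in> N \<and> x \<noteq> y \<and> \<not> E x y}"
  define C where "C = R\<^sup>* `` {a}"
  have "sym R"
    using graphD(1)[OF assms(1)] by (auto simp: R_def intro: symI)
  have "C \<subseteq> N"
    using ab(1) by (auto simp: C_def R_def elim: rtranclE)
  moreover have "N \<subseteq> V" "v \<notin> N"
    using N graphD[OF assms(1)] by auto
  moreover have "a \<in> C" "b \<in> C"
    using ab by (auto simp: C_def R_def)
  ultimately obtain w where w: "w \<in> V - C" "mixed E w C"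
    using prime_graph_mixed_vertex[OF assms(2), of C a b] ab(3) assms(3) by blast
  then obtain x y where "x \<in> C" "y \<in> C" "E w x" "\<not> E w y"
    unfolding mixed_def by blast
  with \<open>sym R\<close> obtain p q where pq: "p \<in> C" "(p, q) \<in> R" "E w p" "\<not> E w q"
    unfolding C_def by (rule mixed_on_component_splits_edge)
  have "w \<notin> N"
  proof
    assume "w \<in> N"
    with \<open>y \<in> C\<close> \<open>C \<subseteq> N\<close> \<open>\<not> E w y\<close> w(1) have "(y, w) \<in> R"
      using graphD(1)[OF assms(1), of y w] by (auto simp: R_def)
    with \<open>y \<in> C\<close> w(1) show False
      by (auto simp: C_def intro: rtrancl_into_rtrancl)
  qed
  have "p \<in> N" "q \<in> N" "p \<noteq> q" "\<not> E q p"
    using pq(2) graphD(1)[OF assms(1), of q p] by (auto simp: R_def)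
  moreover have "E q v" "\<not> E q w" "\<not> E v w"
    using \<open>q \<in> N\<close> \<open>w \<notin> N\<close> pq(4) N graphD(1)[OF assms(1)] by blast+
  moreover have "distinct [q, v, p, w]"
    using \<open>p \<in> N\<close> \<open>q \<in> N\<close> \<open>p \<noteq> q\<close> \<open>w \<notin> N\<close> \<open>v \<notin> N\<close> pq(4) N by auto
  ultimately show thesis
    using that induced_P4_path[OF assms(1), of q v p w] pq(3) w(1) assms(3) N \<open>N \<subseteq> V\<close>
      graphD(1)[OF assms(1), of w p] by auto
qed

lemma not_antisimplicial_induced_P4:
  assumes "graph V E" "prime_graph V E" "v \<in> V" and "\<not> antisimplicial V E v"
  obtains S where "induced_P4 V E S" "v \<in> S" "deg_in E S v = 1"
proof -
  define M where "M = V - nbhd V E v - {v}"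
  have M: "x \<in> M \<longleftrightarrow> x \<in> V \<and> x \<noteq> v \<and> \<not> E v x" for x
    by (auto simp: M_def nbhd_def)
  obtain a b where ab: "a \<in> M" "b \<in> M" "a \<noteq> b" "E a b"
    using assms(4) graphD[OF assms(1)] unfolding antisimplicial_def stable_def M_def nbhd_def
    by blast
  define R where "R = {(x, y). x \<in> M \<and> y \<in> M \<and> E x y}"
  define C where "C = R\<^sup>* `` {a}"
  have "sym R"
    using graphD(1)[OF assms(1)] by (auto simp: R_def intro: symI)
  have "C \<subseteq> M"
    using ab(1) by (auto simp: C_def R_def elim: rtranclE)
  moreover have "M \<subseteq> V" "v \<notin> M"
    using M by auto
  moreover have "a \<in> C" "b \<in> C"
    using ab by (auto simp: C_def R_def)
  ultimately obtain w where w: "w \<in> V - C" "mixed E w C"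
    using prime_graph_mixed_vertex[OF assms(2), of C a b] ab(3) assms(3) by blast
  then obtain x y where "x \<in> C" "y \<in> C" "E w x" "\<not> E w y"
    unfolding mixed_def by blast
  with \<open>sym R\<close> obtain p q where pq: "p \<in> C" "(p, q) \<in> R" "E w p" "\<not> E w q"
    unfolding C_def by (rule mixed_on_component_splits_edge)
  have "w \<notin> M"
  proof
    assume "w \<in> M"
    with \<open>x \<in> C\<close> \<open>C \<subseteq> M\<close> \<open>E w x\<close> have "(x, w) \<in> R"
      using graphD(1)[OF assms(1), of w x] by (auto simp: R_def)
    with \<open>x \<in> C\<close> w(1) show False
      by (auto simp: C_def intro: rtrancl_into_rtrancl)
  qed
  have "p \<in> M" "q \<in> M" "E p q"
    using pq(2) by (auto simp: R_def)
  have "w \<noteq> v"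
    using \<open>x \<in> C\<close> \<open>C \<subseteq> M\<close> \<open>E w x\<close> M by auto
  with \<open>w \<notin> M\<close> w(1) have "E v w"
    using M by auto
  moreover have "\<not> E v p" "\<not> E v q"
    using \<open>p \<in> M\<close> \<open>q \<in> M\<close> M by auto
  moreover have "distinct [v, w, p, q]"
    using \<open>p \<in> M\<close> \<open>q \<in> M\<close> \<open>w \<notin> M\<close> \<open>w \<noteq> v\<close> \<open>E p q\<close> pq(4)
      M graphD(2)[OF assms(1)] by auto
  ultimately show thesis
    using that induced_P4_path[OF assms(1), of v w p q] pq(3,4) \<open>E p q\<close> w(1) assms(3)
      \<open>p \<in> M\<close> \<open>q \<in> M\<close> M by auto
qed

theorem lemma3p3:
  fixes V :: "'a set" and E :: "'a \<Rightarrow> 'a \<Rightarrow> bool" and v :: 'a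
  assumes "graph V E" and "prime_graph V E" and "v \<in> V"
  shows "(simplicial V E v \<longleftrightarrow>
            (\<forall>S. induced_P4 V E S \<and> v \<in> S \<longrightarrow> deg_in E S v = 1))
       \<and> (antisimplicial V E v \<longleftrightarrow>
            (\<forall>S. induced_P4 V E S \<and> v \<in> S \<longrightarrow> deg_in E S v = 2))"
proof
  have "(1::nat) \<noteq> 2"
    by simp
  show "simplicial V E v \<longleftrightarrow> (\<forall>S. induced_P4 V E S \<and> v \<in> S \<longrightarrow> deg_in E S v = 1)"
    using simplicial_deg_in_P4 not_simplicial_induced_P4[OF assms] \<open>1 \<noteq> 2\<close> by metis
  show "antisimplicial V E v \<longleftrightarrow> (\<forall>S. induced_P4 V E S \<and> v \<in> S \<longrightarrow> deg_in E S v = 2)"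
    using antisimplicial_deg_in_P4 not_antisimplicial_induced_P4[OF assms] \<open>1 \<noteq> 2\<close> by metis
qed

end
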